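(* For every integer $d \ge 1$, every monoid in $\mathcal{C}_d$ is isomorphic to an additive submonoid of $\mathbb{N}^d$ of rank $d$.
   Context: All monoids are commutative, cancellative and reduced (the only invertible element is the identity). $\mathbb{N} = \{0,1,2,\dots\}$. For a monoid $H$, $\mathrm{gp}(H)$ denotes its Grothendieck (difference) group, and the rank of $H$ is the rank of the abelian group $\mathrm{gp}(H)$, i.e. $\dim_{\mathbb{Q}} \mathbb{Q}\otimes_{\mathbb{Z}} \mathrm{gp}(H)$. For $d \ge 1$, $\mathcal{C}_d$ denotes the collection of all rank-$d$ submonoids of free commutative monoids of finite rank. *)

theory Defs
  imports Main
begin

text \<open>The free commutative monoid of rank n, realised as N^n: functions nat => nat
  vanishing outside the indices 0..n-1, with pointwise addition.\<close>
definition free_cmon :: "nat \<Rightarrow> (nat \<Rightarrow> nat) set" where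
  "free_cmon n = {x. \<forall>i\<ge>n. x i = 0}"

definition submonoid_of :: "(nat \<Rightarrow> nat) set \<Rightarrow> (nat \<Rightarrow> nat) set \<Rightarrow> bool" where
  "submonoid_of H M \<longleftrightarrow> H \<subseteq> M \<and> (\<lambda>i. 0) \<in> H \<and>
     (\<forall>a\<in>H. \<forall>b\<in>H. (\<lambda>i. a i + b i) \<in> H)"

text \<open>Grothendieck group of a submonoid H of N^n, realised inside Z^n as the set of differences.\<close>
definition gp :: "(nat \<Rightarrow> nat) set \<Rightarrow> (nat \<Rightarrow> int) set" where
  "gp H = {(\<lambda>i. int (a i) - int (b i)) | a b. a \<in> H \<and> b \<in> H}"

definition z_indep :: "(nat \<Rightarrow> int) set \<Rightarrow> bool" where
  "z_indep S \<longleftrightarrow> finite S \<and>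
     (\<forall>c. (\<forall>i. (\<Sum>v\<in>S. c v * v i) = 0) \<longrightarrow> (\<forall>v\<in>S. c v = 0))"

text \<open>Rank of an abelian group G (of integer vectors): the maximal size of a Z-linearly
  independent subset, i.e. dim_Q (Q tensor G).\<close>
definition has_rank :: "(nat \<Rightarrow> int) set \<Rightarrow> nat \<Rightarrow> bool" where
  "has_rank G d \<longleftrightarrow> (\<exists>S\<subseteq>G. z_indep S \<and> card S = d) \<and>
     (\<forall>S\<subseteq>G. z_indep S \<longrightarrow> card S \<le> d)"

definition monoid_iso :: "(nat \<Rightarrow> nat) set \<Rightarrow> (nat \<Rightarrow> nat) set \<Rightarrow> bool" where
  "monoid_iso H H' \<longleftrightarrow> (\<exists>f. bij_betw f H H' \<and> f (\<lambda>i. 0) = (\<lambda>i. 0) \<and>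
     (\<forall>a\<in>H. \<forall>b\<in>H. f (\<lambda>i. a i + b i) = (\<lambda>i. f a i + f b i)))"

end

theory Submission
  imports Defs
begin

text \<open>Choose a set I of coordinates that is minimal among those on which no nonzero element
  of gp H vanishes identically (the first n coordinates form such a set). By minimality, for
  each i \<in> I some element of gp H vanishes on I - {i} but not at i; these elements form a
  diagonal, hence independent, family, so |I| \<le> d. Projection onto the coordinates in I is
  therefore injective on gp H; it maps H isomorphically onto a submonoid of N^|I| \<subseteq> N^d and
  preserves the rank of the Grothendieck group.\<close>

definition lincomb :: "((nat \<Rightarrow> int) \<Rightarrow> int) \<Rightarrow> (nat \<Rightarrow> int) set \<Rightarrow> nat \<Rightarrow> int" where
  "lincomb c S = (\<lambda>i. \<Sum>v\<in>S. c v * v i)"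

lemma z_indep_iff_lincomb:
  "z_indep S \<longleftrightarrow> finite S \<and> (\<forall>c. lincomb c S = (\<lambda>i. 0) \<longrightarrow> (\<forall>v\<in>S. c v = 0))"
  unfolding z_indep_def lincomb_def by (simp add: fun_eq_iff)

lemma lincomb_image:
  "inj_on F S \<Longrightarrow> lincomb c (F ` S) = (\<lambda>j. \<Sum>v\<in>S. c (F v) * F v j)"
  unfolding lincomb_def by (simp add: sum.reindex)

subsection \<open>The Grothendieck group\<close>

lemma gp_memI: "a \<in> H \<Longrightarrow> b \<in> H \<Longrightarrow> v = (\<lambda>i. int (a i) - int (b i)) \<Longrightarrow> v \<in> gp H"
  unfolding gp_def by blast

lemma gp_zero: "submonoid_of H M \<Longrightarrow> (\<lambda>i. 0) \<in> gp H"
  unfolding gp_def submonoid_of_def by force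

lemma gp_of_nat: "submonoid_of H M \<Longrightarrow> a \<in> H \<Longrightarrow> (\<lambda>i. int (a i)) \<in> gp H"
  unfolding gp_def submonoid_of_def by force

lemma gp_add:
  assumes "submonoid_of H M" "v \<in> gp H" "w \<in> gp H"
  shows "(\<lambda>i. v i + w i) \<in> gp H"
proof -
  obtain a b where ab: "a \<in> H" "b \<in> H" "v = (\<lambda>i. int (a i) - int (b i))"
    using assms(2) unfolding gp_def by blast
  obtain a' b' where ab': "a' \<in> H" "b' \<in> H" "w = (\<lambda>i. int (a' i) - int (b' i))"
    using assms(3) unfolding gp_def by blast
  have "(\<lambda>i. a i + a' i) \<in> H" "(\<lambda>i. b i + b' i) \<in> H"
    using assms(1) ab ab' unfolding submonoid_of_def by auto
  moreover have "(\<lambda>i. v i + w i) = (\<lambda>i. int (a i + a' i) - int (b i + b' i))"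
    using ab ab' by auto
  ultimately show ?thesis
    by (rule gp_memI)
qed

lemma gp_uminus: "v \<in> gp H \<Longrightarrow> (\<lambda>i. - v i) \<in> gp H"
  unfolding gp_def by force

lemma gp_diff:
  "submonoid_of H M \<Longrightarrow> v \<in> gp H \<Longrightarrow> w \<in> gp H \<Longrightarrow> (\<lambda>i. v i - w i) \<in> gp H"
  using gp_add[OF _ _ gp_uminus] by fastforce

lemma gp_scale:
  assumes "submonoid_of H M" "v \<in> gp H"
  shows "(\<lambda>i. c * v i) \<in> gp H"
proof -
  have nat_mult: "(\<lambda>i. int m * v i) \<in> gp H" for m
  proof (induction m)
    case 0
    then show ?case using gp_zero[OF assms(1)] by simp
  next
    case (Suc m)
    then show ?case
      using gp_add[OF assms(1) Suc assms(2)] by (simp add: algebra_simps)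
  qed
  show ?thesis
  proof (cases "c \<ge> 0")
    case True
    then show ?thesis using nat_mult[of "nat c"] by simp
  next
    case False
    then show ?thesis using gp_uminus[OF nat_mult[of "nat (- c)"]] by simp
  qed
qed

lemma gp_lincomb:
  assumes "submonoid_of H M" "finite S" "S \<subseteq> gp H"
  shows "lincomb c S \<in> gp H"
  using assms(2,3)
proof (induction S rule: finite_induct)
  case empty
  then show ?case using gp_zero[OF assms(1)] by (simp add: lincomb_def)
next
  case (insert x F)
  then show ?case
    using gp_add[OF assms(1) gp_scale[OF assms(1)] insert.IH] by (simp add: lincomb_def)
qed

subsection \<open>Rank under injective linear maps\<close>

lemma z_indep_image_iff:
  assumes inj: "inj_on F S"
    and lin: "\<And>c. (\<lambda>j. \<Sum>v\<in>S. c v * F v j) = (\<lambda>j. 0) \<longleftrightarrow> lincomb c S = (\<lambda>i. 0)"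
  shows "z_indep (F ` S) \<longleftrightarrow> z_indep S"
proof -
  have "(\<forall>c. lincomb c (F ` S) = (\<lambda>i. 0) \<longrightarrow> (\<forall>u\<in>F ` S. c u = 0))
      \<longleftrightarrow> (\<forall>c. lincomb c S = (\<lambda>i. 0) \<longrightarrow> (\<forall>v\<in>S. c v = 0))"
  proof
    assume indep: "\<forall>c. lincomb c (F ` S) = (\<lambda>i. 0) \<longrightarrow> (\<forall>u\<in>F ` S. c u = 0)"
    show "\<forall>c. lincomb c S = (\<lambda>i. 0) \<longrightarrow> (\<forall>v\<in>S. c v = 0)"
    proof (intro allI impI ballI)
      fix c v assume "lincomb c S = (\<lambda>i. 0)" and v: "v \<in> S"
      define c' where "c' = c \<circ> inv_into S F"
      have c'F: "c' (F w) = c w" if "w \<in> S" for w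
        using inv_into_f_f[OF inj that] by (simp add: c'_def)
      have "lincomb c' (F ` S) = (\<lambda>j. \<Sum>w\<in>S. c w * F w j)"
        by (simp add: lincomb_image[OF inj] c'F)
      also have "\<dots> = (\<lambda>j. 0)"
        using lin \<open>lincomb c S = (\<lambda>i. 0)\<close> by blast
      finally have "c' (F v) = 0"
        using indep v by blast
      then show "c v = 0"
        using c'F v by simp
    qed
  next
    assume indep: "\<forall>c. lincomb c S = (\<lambda>i. 0) \<longrightarrow> (\<forall>v\<in>S. c v = 0)"
    show "\<forall>c. lincomb c (F ` S) = (\<lambda>i. 0) \<longrightarrow> (\<forall>u\<in>F ` S. c u = 0)"
    proof (intro allI impI)
      fix c assume "lincomb c (F ` S) = (\<lambda>i. 0)"
      then have "lincomb (c \<circ> F) S = (\<lambda>i. 0)"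
        using lin[of "c \<circ> F"] by (simp add: lincomb_image[OF inj])
      then show "\<forall>u\<in>F ` S. c u = 0"
        using indep by auto
    qed
  qed
  then show ?thesis
    using finite_image_iff[OF inj] by (simp add: z_indep_iff_lincomb)
qed

lemma has_rank_image:
  assumes inj: "inj_on F G"
    and lin: "\<And>S c. S \<subseteq> G \<Longrightarrow> finite S \<Longrightarrow>
      (\<lambda>j. \<Sum>v\<in>S. c v * F v j) = (\<lambda>j. 0) \<longleftrightarrow> lincomb c S = (\<lambda>i. 0)"
    and rank: "has_rank G d"
  shows "has_rank (F ` G) d"
  unfolding has_rank_def
proof (intro conjI allI impI)
  obtain S where S: "S \<subseteq> G" "z_indep S" "card S = d"
    using rank unfolding has_rank_def by blast
  have "inj_on F S"
    using inj S(1) by (rule inj_on_subset)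
  moreover have "finite S"
    using S(2) by (simp add: z_indep_def)
  ultimately have "z_indep (F ` S)" "card (F ` S) = d"
    using z_indep_image_iff lin S by (auto simp: card_image)
  then show "\<exists>T\<subseteq>F ` G. z_indep T \<and> card T = d"
    using S(1) by blast
next
  fix T assume T: "T \<subseteq> F ` G" "z_indep T"
  then obtain S where S: "S \<subseteq> G" "inj_on F S" "T = F ` S"
    by (meson subset_image_inj)
  then have "finite S"
    using T(2) finite_image_iff[OF S(2)] by (simp add: z_indep_def)
  then have "z_indep S"
    using z_indep_image_iff[OF S(2)] lin S T(2) by blast
  then show "card T \<le> d"
    using rank S by (simp add: has_rank_def card_image)
qed

subsection \<open>Separating sets of coordinates\<close>

definition coords_separate :: "nat set \<Rightarrow> (nat \<Rightarrow> int) set \<Rightarrow> bool" where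
  "coords_separate I G \<longleftrightarrow> (\<forall>v\<in>G. (\<forall>i\<in>I. v i = 0) \<longrightarrow> v = (\<lambda>i. 0))"

lemma coords_separateD:
  "coords_separate I G \<Longrightarrow> v \<in> G \<Longrightarrow> (\<And>i. i \<in> I \<Longrightarrow> v i = 0) \<Longrightarrow> v = (\<lambda>i. 0)"
  unfolding coords_separate_def by blast

lemma coords_separate_gp_free_cmon:
  assumes "submonoid_of H (free_cmon n)"
  shows "coords_separate {..<n} (gp H)"
  unfolding coords_separate_def
proof (intro ballI impI)
  fix v assume v: "v \<in> gp H" "\<forall>i\<in>{..<n}. v i = 0"
  have outside: "v i = 0" if "i \<ge> n" for i
  proof -
    obtain a b where ab: "a \<in> H" "b \<in> H" "v = (\<lambda>i. int (a i) - int (b i))"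
      using v(1) unfolding gp_def by blast
    moreover have "a i = 0" "b i = 0"
      using ab(1,2) assms that unfolding submonoid_of_def free_cmon_def by auto
    ultimately show ?thesis
      by simp
  qed
  show "v = (\<lambda>i. 0)"
  proof
    fix i show "v i = 0"
      using v(2) outside by (cases "i < n") auto
  qed
qed

lemma diagonal_family_z_indep:
  assumes "finite I"
    and diag: "\<And>i. i \<in> I \<Longrightarrow> w i i \<noteq> 0" "\<And>i j. i \<in> I \<Longrightarrow> j \<in> I \<Longrightarrow> j \<noteq> i \<Longrightarrow> w i j = 0"
  shows "inj_on w I" "z_indep (w ` I)"
proof -
  show inj: "inj_on w I"
    using diag by (metis inj_onI)
  have "c (w i) = 0" if c: "lincomb c (w ` I) = (\<lambda>i. 0)" and i: "i \<in> I" for c i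
  proof -
    have "0 = (\<Sum>i'\<in>I. c (w i') * w i' i)"
      using fun_cong[OF c, of i] by (simp add: lincomb_image[OF inj])
    also have "\<dots> = c (w i) * w i i"
      using diag i \<open>finite I\<close> by (subst sum.remove) (auto intro!: sum.neutral)
    finally show ?thesis
      using diag(1)[OF i] by simp
  qed
  then show "z_indep (w ` I)"
    using \<open>finite I\<close> by (auto simp: z_indep_iff_lincomb)
qed

lemma card_minimal_coords_separate_le_rank:
  assumes "finite I" "coords_separate I G" "has_rank G d"
    and minimal: "\<And>i. i \<in> I \<Longrightarrow> \<not> coords_separate (I - {i}) G"
  shows "card I \<le> d"
proof -
  have "\<exists>v\<in>G. v i \<noteq> 0 \<and> (\<forall>j\<in>I - {i}. v j = 0)" if i: "i \<in> I" for i
  proof -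
    obtain v where v: "v \<in> G" "\<forall>j\<in>I - {i}. v j = 0" "v \<noteq> (\<lambda>i. 0)"
      using minimal[OF i] unfolding coords_separate_def by blast
    then have "v i \<noteq> 0"
      using \<open>coords_separate I G\<close> unfolding coords_separate_def by (metis Diff_iff singletonD)
    with v show ?thesis by blast
  qed
  then obtain w where w: "\<And>i. i \<in> I \<Longrightarrow> w i \<in> G \<and> w i i \<noteq> 0 \<and> (\<forall>j\<in>I - {i}. w i j = 0)"
    by metis
  then have "inj_on w I" "z_indep (w ` I)"
    using diagonal_family_z_indep[OF \<open>finite I\<close>, of w] by auto
  moreover have "w ` I \<subseteq> G"
    using w by blast
  ultimately show ?thesis
    using \<open>has_rank G d\<close> by (auto simp: has_rank_def card_image)
qed

lemma exists_coords_separate_card_le_rank: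
  assumes "finite I\<^sub>0" "coords_separate I\<^sub>0 G" "has_rank G d"
  shows "\<exists>I. finite I \<and> card I \<le> d \<and> coords_separate I G"
proof -
  let ?P = "\<lambda>I. finite I \<and> coords_separate I G"
  obtain I where I: "?P I" and least: "\<And>J. ?P J \<Longrightarrow> card I \<le> card J"
    using ex_has_least_nat[of ?P I\<^sub>0 card] assms(1,2) by blast
  have "\<not> coords_separate (I - {i}) G" if "i \<in> I" for i
    using least[of "I - {i}"] I that card_Diff1_less by fastforce
  then show ?thesis
    using I card_minimal_coords_separate_le_rank assms(3) by blast
qed

subsection \<open>Projection onto a set of coordinates\<close>

definition select_coords :: "(nat \<Rightarrow> nat) \<Rightarrow> nat \<Rightarrow> (nat \<Rightarrow> 'a::zero) \<Rightarrow> nat \<Rightarrow> 'a" where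
  "select_coords \<sigma> k v = (\<lambda>j. if j < k then v (\<sigma> j) else 0)"

lemma select_coords_pointwise:
  "f 0 0 = 0 \<Longrightarrow> select_coords \<sigma> k (\<lambda>i. f (v i) (w i))
    = (\<lambda>j. f (select_coords \<sigma> k v j) (select_coords \<sigma> k w j))"
  by (simp add: select_coords_def fun_eq_iff)

lemma select_coords_eq_zero_iff:
  "select_coords \<sigma> k v = (\<lambda>j. 0) \<longleftrightarrow> (\<forall>i\<in>\<sigma> ` {..<k}. v i = 0)"
  by (auto simp: select_coords_def fun_eq_iff)

lemma select_coords_lincomb:
  "(\<lambda>j. \<Sum>v\<in>S. c v * select_coords \<sigma> k v j) = select_coords \<sigma> k (lincomb c S)"
  by (auto simp: select_coords_def lincomb_def fun_eq_iff)

lemma inj_on_select_coords_gp: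
  assumes "submonoid_of H M" "coords_separate (\<sigma> ` {..<k}) (gp H)"
  shows "inj_on (select_coords \<sigma> k) (gp H)"
proof (rule inj_onI)
  fix v w assume vw: "v \<in> gp H" "w \<in> gp H" "select_coords \<sigma> k v = select_coords \<sigma> k w"
  have "select_coords \<sigma> k (\<lambda>i. v i - w i)
      = (\<lambda>j. select_coords \<sigma> k v j - select_coords \<sigma> k w j)"
    by (rule select_coords_pointwise) simp
  also have "\<dots> = (\<lambda>j. 0)"
    using vw(3) by simp
  finally have "\<forall>i\<in>\<sigma> ` {..<k}. v i - w i = 0"
    by (simp only: select_coords_eq_zero_iff)
  then have "(\<lambda>i. v i - w i) = (\<lambda>i. 0)"
    using coords_separateD[OF assms(2) gp_diff[OF assms(1) vw(1,2)]] by blast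
  then show "v = w"
    by (simp add: fun_eq_iff)
qed

lemma inj_on_select_coords_monoid:
  assumes "submonoid_of H M" "inj_on (select_coords \<sigma> k) (gp H)"
  shows "inj_on (select_coords \<sigma> k) H"
proof (rule inj_onI)
  fix a b assume ab: "a \<in> H" "b \<in> H" "select_coords \<sigma> k a = select_coords \<sigma> k b"
  have "select_coords \<sigma> k (\<lambda>i. int (x i)) = (\<lambda>j. int (select_coords \<sigma> k x j))" for x
    by (simp add: select_coords_def fun_eq_iff)
  then have "select_coords \<sigma> k (\<lambda>i. int (a i)) = select_coords \<sigma> k (\<lambda>i. int (b i))"
    using ab(3) by presburger
  then have "(\<lambda>i. int (a i)) = (\<lambda>i. int (b i))"
    using assms gp_of_nat ab(1,2) by (meson inj_onD)
  then show "a = b"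
    by (simp add: fun_eq_iff)
qed

lemma gp_image_select_coords: "gp (select_coords \<sigma> k ` H) = select_coords \<sigma> k ` gp H"
proof -
  have diff: "select_coords \<sigma> k (\<lambda>i. int (a i) - int (b i))
      = (\<lambda>j. int (select_coords \<sigma> k a j) - int (select_coords \<sigma> k b j))" for a b
    by (rule select_coords_pointwise) simp
  show ?thesis
  proof
    show "gp (select_coords \<sigma> k ` H) \<subseteq> select_coords \<sigma> k ` gp H"
    proof
      fix u assume "u \<in> gp (select_coords \<sigma> k ` H)"
      then obtain a b where "a \<in> H" "b \<in> H"
        and "u = (\<lambda>j. int (select_coords \<sigma> k a j) - int (select_coords \<sigma> k b j))"
        unfolding gp_def by blast
      then show "u \<in> select_coords \<sigma> k ` gp H"
        unfolding diff[symmetric] by (blast intro: gp_memI)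
    qed
    show "select_coords \<sigma> k ` gp H \<subseteq> gp (select_coords \<sigma> k ` H)"
    proof
      fix u assume "u \<in> select_coords \<sigma> k ` gp H"
      then obtain a b where "a \<in> H" "b \<in> H" "u = select_coords \<sigma> k (\<lambda>i. int (a i) - int (b i))"
        unfolding gp_def by blast
      then show "u \<in> gp (select_coords \<sigma> k ` H)"
        unfolding diff by (blast intro: gp_memI)
    qed
  qed
qed

lemma submonoid_of_select_coords:
  assumes "submonoid_of H M" "k \<le> d"
  shows "submonoid_of (select_coords \<sigma> k ` H) (free_cmon d)"
  unfolding submonoid_of_def free_cmon_def
proof (intro conjI ballI)
  show "select_coords \<sigma> k ` H \<subseteq> {x. \<forall>i\<ge>d. x i = 0}"
    using assms(2) by (auto simp: select_coords_def)
  have "select_coords \<sigma> k (\<lambda>i. 0) = (\<lambda>i. 0::nat)"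
    by (simp add: select_coords_def)
  then show "(\<lambda>i. 0) \<in> select_coords \<sigma> k ` H"
    using assms(1) unfolding submonoid_of_def by (metis image_eqI)
next
  fix x y assume "x \<in> select_coords \<sigma> k ` H" "y \<in> select_coords \<sigma> k ` H"
  then obtain a b where ab: "a \<in> H" "b \<in> H" "x = select_coords \<sigma> k a" "y = select_coords \<sigma> k b"
    by blast
  then have "(\<lambda>i. x i + y i) = select_coords \<sigma> k (\<lambda>i. a i + b i)"
    by (simp add: select_coords_def fun_eq_iff)
  moreover have "(\<lambda>i. a i + b i) \<in> H"
    using assms(1) ab(1,2) unfolding submonoid_of_def by blast
  ultimately show "(\<lambda>i. x i + y i) \<in> select_coords \<sigma> k ` H"
    by blast
qed

lemma monoid_iso_select_coords:
  "inj_on (select_coords \<sigma> k) H \<Longrightarrow> monoid_iso H (select_coords \<sigma> k ` H)"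
  unfolding monoid_iso_def bij_betw_def
  by (intro exI[of _ "select_coords \<sigma> k"]) (simp add: select_coords_def fun_eq_iff)

lemma has_rank_gp_image_select_coords:
  assumes H: "submonoid_of H M" and inj: "inj_on (select_coords \<sigma> k) (gp H)"
    and "has_rank (gp H) d"
  shows "has_rank (gp (select_coords \<sigma> k ` H)) d"
  unfolding gp_image_select_coords
proof (rule has_rank_image[OF inj _ \<open>has_rank (gp H) d\<close>])
  fix S c assume "S \<subseteq> gp H" "finite S"
  then have "lincomb c S \<in> gp H"
    using gp_lincomb[OF H] by blast
  moreover have "select_coords \<sigma> k (\<lambda>i. 0) = (\<lambda>j. 0::int)"
    by (simp add: select_coords_def)
  ultimately have "select_coords \<sigma> k (lincomb c S) = (\<lambda>j. 0) \<longleftrightarrow> lincomb c S = (\<lambda>i. 0)"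
    using inj gp_zero[OF H] by (metis inj_onD)
  then show "(\<lambda>j. \<Sum>v\<in>S. c v * select_coords \<sigma> k v j) = (\<lambda>j. 0) \<longleftrightarrow> lincomb c S = (\<lambda>i. 0)"
    by (simp only: select_coords_lincomb)
qed

theorem lemma4p1:
  fixes d n :: nat and H :: "(nat \<Rightarrow> nat) set"
  assumes "d \<ge> 1"
    and "submonoid_of H (free_cmon n)"
    and "has_rank (gp H) d"
  shows "\<exists>H'. submonoid_of H' (free_cmon d) \<and> has_rank (gp H') d \<and> monoid_iso H H'"
proof -
  obtain I where I: "finite I" "card I \<le> d" "coords_separate I (gp H)"
    using exists_coords_separate_card_le_rank[OF _ coords_separate_gp_free_cmon] assms(2,3)
    by blast
  obtain \<sigma> where "bij_betw \<sigma> {0..<card I} I"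
    using ex_bij_betw_nat_finite[OF \<open>finite I\<close>] by blast
  then have "\<sigma> ` {..<card I} = I"
    by (simp add: bij_betw_def atLeast0LessThan)
  then have inj: "inj_on (select_coords \<sigma> (card I)) (gp H)"
    using inj_on_select_coords_gp[OF assms(2), of \<sigma> "card I"] I(3) by simp
  let ?H' = "select_coords \<sigma> (card I) ` H"
  have "submonoid_of ?H' (free_cmon d)"
    using submonoid_of_select_coords[OF assms(2) I(2)] .
  moreover have "has_rank (gp ?H') d"
    using has_rank_gp_image_select_coords[OF assms(2) inj assms(3)] .
  moreover have "monoid_iso H ?H'"
    using monoid_iso_select_coords[OF inj_on_select_coords_monoid[OF assms(2) inj]] .
  ultimately show ?thesis
    by blast
qed

end
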